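(* For all homogeneous $\varphi_1,\varphi_2,\psi\in CC^\bullet(\mathscr A)[1]$, as operators on $CC_\bullet(\mathscr A)[1]$: $\rho_{\varphi_1\circ\varphi_2,\psi}-\rho_{\varphi_1,[\varphi_2,\psi]}+(-1)^{|\varphi_1|'|\varphi_2|'}[\mathcal L_{\varphi_2},\rho_{\varphi_1,\psi}]=T_{\varphi_1,\varphi_2,\psi}+(-1)^{|\varphi_1|'|\varphi_2|'}T_{\varphi_2,\varphi_1,\psi}$, where $T_{\alpha,\beta,\psi}:=\mathcal L^{0}_{\alpha}\circ\rho_{\beta,\psi}$ and $\mathcal L^{0}_\alpha(\mathbb X):=\sum_{0\le i\le j\le k}(-1)^{(|x_0|'+\cdots+|x_j|')(|x_{j+1}|'+\cdots+|x_k|')}\alpha(x_{j+1},\dots,x_k,x_0,\dots,x_i)\otimes x_{i+1}\otimes\cdots\otimes x_j$ is the second summand of $\mathcal L_\alpha$ (i.e. $T_{\alpha,\beta,\psi}$ is the operation $\{\alpha\{\beta\{\psi,\mathit{in}\}\}\}$: apply $\rho_{\beta,\psi}$, then feed the resulting first tensor factor together with neighbouring inputs cyclically into $\alpha$).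
   Context: Same notation as for Hochschild operations: $\mathscr A$ with graded $R$-modules $\mathrm{Hom}_{\mathscr A}(X,Y)$; $CC^\bullet(\mathscr A)[1]$ and $CC_\bullet(\mathscr A)[1]$ as usual, chains $\mathbb X=x_0\otimes\cdots\otimes x_k$ with $x_i$ in shifted Homs of shifted degree $|x_i|'$, and $|\varphi|'$ the degree of a cochain in $CC^\bullet(\mathscr A)[1]$. $(\varphi\circ\psi)(x_1,\dots,x_k)=\sum_{i\le j}(-1)^{|\psi|'(|x_1|'+\cdots+|x_i|')}\varphi(x_1,\dots,x_i,\psi(x_{i+1},\dots,x_j),\dots,x_k)$; $[\varphi,\psi]=\varphi\circ\psi-(-1)^{|\varphi|'|\psi|'}\psi\circ\varphi$; $\mathcal L_\varphi(\mathbb X)=\sum_{i\le j}(-1)^{|\varphi|'(|x_0|'+\cdots+|x_i|')}x_0\otimes\cdots\otimes x_i\otimes\varphi(x_{i+1},\dots,x_j)\otimes\cdots\otimes x_k+\mathcal L^0_\varphi(\mathbb X)$; $\rho_{\varphi,\psi}(\mathbb X)=\sum_{i\le j\le s\le t}(-1)^{|\psi|'(|x_{j+1}|'+\cdots+|x_s|')+(|x_0|'+\cdots+|x_j|')(|x_{j+1}|'+\cdots+|x_k|')}\varphi(x_{j+1},\dots,x_s,\psi(x_{s+1},\dots,x_t),x_{t+1},\dots,x_k,x_0,\dots,x_i)\otimes x_{i+1}\otimes\cdots\otimes x_j$. Graded commutators of operators use degrees $|\mathcal L_\varphi|=|\varphi|'$ and $|\rho_{\varphi,\psi}|=|\varphi|'+|\psi|'$.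 No reducedness assumption on the cochains is needed. *)

theory Defs
  imports Main
begin

text \<open>A homogeneous element of a shifted Hom module: (shifted degree, value).
  A cochain in CC(A)[1]: (shifted degree, function on tuples of homogeneous elements).
  Operators on chains are represented in transposed form: an operator P is given by
  P t X = t(P(X)) for every multilinear t on elementary tensors X = x_0 (x) ... (x) x_k
  (extended additively over the formal sum P(X)), so composition P o Q is
  Q applied to (P t).\<close>

type_synonym 'm hel = "int \<times> 'm"
type_synonym 'm coch = "int \<times> ('m hel list \<Rightarrow> 'm)"
type_synonym ('m, 'c) chop = "('m hel list \<Rightarrow> 'c) \<Rightarrow> 'm hel list \<Rightarrow> 'c"

definition sg :: "int \<Rightarrow> 'a::ab_group_add \<Rightarrow> 'a" where
  "sg n a = (if even n then a else - a)"

definition degs :: "'m hel list \<Rightarrow> int" where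
  "degs xs = sum_list (map fst xs)"

definition seg :: "nat \<Rightarrow> nat \<Rightarrow> 'a list \<Rightarrow> 'a list" where
  "seg a b xs = drop a (take b xs)"

text \<open>additivity in each tensor slot (R-multilinearity implies this)\<close>
definition multilin :: "('m::ab_group_add hel list \<Rightarrow> 'c::ab_group_add) \<Rightarrow> bool" where
  "multilin f \<longleftrightarrow> (\<forall>xs ys d a b. f (xs @ (d, a + b) # ys) = f (xs @ (d, a) # ys) + f (xs @ (d, b) # ys))"

definition app :: "'m coch \<Rightarrow> 'm hel list \<Rightarrow> 'm hel" where
  "app \<phi> xs = (fst \<phi> + degs xs, snd \<phi> xs)"

text \<open>Gerstenhaber circle product: x_1..x_k is the list xs, indices 0 \<le> i \<le> j \<le> k\<close>
definition gcomp :: "'m::ab_group_add coch \<Rightarrow> 'm coch \<Rightarrow> 'm coch" where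
  "gcomp \<phi> \<psi> = (fst \<phi> + fst \<psi>, \<lambda>xs.
     \<Sum>j\<le>length xs. \<Sum>i\<le>j. sg (fst \<psi> * degs (take i xs))
        (snd \<phi> (take i xs @ [app \<psi> (seg i j xs)] @ drop j xs)))"

definition gbr :: "'m::ab_group_add coch \<Rightarrow> 'm coch \<Rightarrow> 'm coch" where
  "gbr \<phi> \<psi> = (fst \<phi> + fst \<psi>, \<lambda>xs.
     snd (gcomp \<phi> \<psi>) xs - sg (fst \<phi> * fst \<psi>) (snd (gcomp \<psi> \<phi>) xs))"

text \<open>Chains X = x_0..x_k are lists; x_0..x_i = take (i+1) X, x_{i+1}..x_j = seg (i+1) (j+1) X.\<close>

definition L0 :: "'m::ab_group_add coch \<Rightarrow> ('m, 'c::ab_group_add) chop" where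
  "L0 \<alpha> t X = (\<Sum>j<length X. \<Sum>i\<le>j.
     sg (degs (take (j+1) X) * degs (drop (j+1) X))
       (t (app \<alpha> (drop (j+1) X @ take (i+1) X) # seg (i+1) (j+1) X)))"

definition Lie :: "'m::ab_group_add coch \<Rightarrow> ('m, 'c::ab_group_add) chop" where
  "Lie \<phi> t X = (\<Sum>j<length X. \<Sum>i\<le>j.
     sg (fst \<phi> * degs (take (i+1) X))
       (t (take (i+1) X @ [app \<phi> (seg (i+1) (j+1) X)] @ drop (j+1) X))) + L0 \<phi> t X"

definition rho :: "'m::ab_group_add coch \<Rightarrow> 'm coch \<Rightarrow> ('m, 'c::ab_group_add) chop" where
  "rho \<phi> \<psi> t X = (\<Sum>q<length X. \<Sum>s\<le>q. \<Sum>j\<le>s. \<Sum>i\<le>j.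
     sg (fst \<psi> * degs (seg (j+1) (s+1) X) + degs (take (j+1) X) * degs (drop (j+1) X))
       (t (app \<phi> (seg (j+1) (s+1) X @ [app \<psi> (seg (s+1) (q+1) X)] @ drop (q+1) X @ take (i+1) X)
           # seg (i+1) (j+1) X)))"

text \<open>composition of operators P o Q (apply Q first), in transposed form\<close>
definition ocomp :: "('m, 'c) chop \<Rightarrow> ('m, 'c) chop \<Rightarrow> ('m, 'c) chop" where
  "ocomp P Q t = Q (P t)"

definition ocomm :: "int \<Rightarrow> int \<Rightarrow> ('m, 'c::ab_group_add) chop \<Rightarrow> ('m, 'c) chop \<Rightarrow> ('m, 'c) chop" where
  "ocomm dP dQ P Q t X = ocomp P Q t X - sg (dP * dQ) (ocomp Q P t X)"

definition Top :: "'m::ab_group_add coch \<Rightarrow> 'm coch \<Rightarrow> 'm coch \<Rightarrow> ('m, 'c::ab_group_add) chop" where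
  "Top \<alpha> \<beta> \<psi> = ocomp (L0 \<alpha>) (rho \<beta> \<psi>)"

end

theory Submission
  imports Defs
begin

text \<open>
  After pulling all inner sums out of the tensor slots by multilinearity, every term of the
  identity becomes a sum, over the decompositions of the chain into seven consecutive (possibly
  empty) segments, of signed summands \<open>\<pm> t(\<phi>\<^sub>1(\<dots>) \<otimes> \<dots>)\<close> in which \<open>\<phi>\<^sub>1\<close>, \<open>\<phi>\<^sub>2\<close> and \<open>\<psi>\<close> are
  each evaluated once on a block of consecutive segments.  Indexing all terms by the same seven
  segments, the summand families of the left-hand side cancel in pairs, the signs agreeing
  because their exponents have equal parity.  What survives is the part of
  \<open>\<rho>\<^bsub>\<phi>\<^sub>1\<circ>\<phi>\<^sub>2,\<psi>\<^esub>\<close> in which the block fed into \<open>\<phi>\<^sub>2\<close> wraps around \<open>x\<^sub>0\<close>, which is \<open>T\<^bsub>\<phi>\<^sub>1,\<phi>\<^sub>2,\<psi>\<^esub>\<close>,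
  and the \<open>\<L>\<^sup>0\<close>-part of \<open>\<L>\<^bsub>\<phi>\<^sub>2\<^esub> \<circ> \<rho>\<^bsub>\<phi>\<^sub>1,\<psi>\<^esub>\<close>, which is \<open>T\<^bsub>\<phi>\<^sub>2,\<phi>\<^sub>1,\<psi>\<^esub>\<close>.
\<close>

section \<open>Sums over decompositions of a list\<close>

definition sum_splits :: "'a list \<Rightarrow> ('a list \<Rightarrow> 'a list \<Rightarrow> 'b::comm_monoid_add) \<Rightarrow> 'b" where
  "sum_splits X F = (\<Sum>i\<le>length X. F (take i X) (drop i X))"

definition sum_splits_ne :: "'a list \<Rightarrow> ('a list \<Rightarrow> 'a list \<Rightarrow> 'b::comm_monoid_add) \<Rightarrow> 'b" where
  "sum_splits_ne X F = sum_splits X (\<lambda>a b. if a = [] then 0 else F a b)"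

lemma sum_splits_Nil [simp]: "sum_splits [] F = F [] []"
  by (simp add: sum_splits_def)

lemma sum_splits_Cons: "sum_splits (x # xs) F = F [] (x # xs) + sum_splits xs (\<lambda>a b. F (x # a) b)"
  unfolding sum_splits_def by (simp add: sum.atMost_Suc_shift del: sum.atMost_Suc)

lemma sum_splits_ne_Nil [simp]: "sum_splits_ne [] F = 0"
  by (simp add: sum_splits_ne_def)

lemma sum_splits_ne_Cons [simp]: "sum_splits_ne (x # xs) F = sum_splits xs (\<lambda>a b. F (x # a) b)"
  by (simp add: sum_splits_ne_def sum_splits_Cons)

lemma sum_splits_unfold_Nil: "sum_splits X F = F [] X + sum_splits_ne X F"
  by (cases X) (simp_all add: sum_splits_Cons sum_splits_ne_def)

lemma sum_splits_add: "sum_splits X (\<lambda>a b. F a b + G a b) = sum_splits X F + sum_splits X G"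
  by (simp add: sum_splits_def sum.distrib)

lemma sum_splits_zero [simp]: "sum_splits X (\<lambda>a b. 0) = 0"
  by (simp add: sum_splits_def)

lemma sum_splits_diff:
  "sum_splits X (\<lambda>a b. F a b - G a b) = sum_splits X F - sum_splits X (G :: _ \<Rightarrow> _ \<Rightarrow> 'b::ab_group_add)"
  by (simp add: sum_splits_def sum_subtractf)

lemma sum_splits_cong: "(\<And>a b. X = a @ b \<Longrightarrow> F a b = G a b) \<Longrightarrow> sum_splits X F = sum_splits X G"
  unfolding sum_splits_def by (rule sum.cong) auto

lemma sum_splits_swap:
  "sum_splits A (\<lambda>x y. sum_splits B (\<lambda>u v. G x y u v)) = sum_splits B (\<lambda>u v. sum_splits A (\<lambda>x y. G x y u v))"
  unfolding sum_splits_def by (rule sum.swap)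

lemma sum_splits_append:
  "sum_splits (xs @ ys) F = sum_splits xs (\<lambda>a r. F a (r @ ys)) + sum_splits_ne ys (\<lambda>a r. F (xs @ a) r)"
proof (induction xs arbitrary: F)
  case Nil
  show ?case by (simp add: sum_splits_unfold_Nil[of ys])
next
  case (Cons x xs)
  show ?case by (simp add: sum_splits_Cons Cons add.assoc)
qed

lemma sum_splits_assoc:
  "sum_splits X (\<lambda>l c. sum_splits l (\<lambda>a b. F a b c)) = sum_splits X (\<lambda>a r. sum_splits r (\<lambda>b c. F a b c))"
proof (induction X arbitrary: F)
  case Nil
  show ?case by simp
next
  case (Cons x xs)
  show ?case
    by (simp add: sum_splits_Cons sum_splits_add Cons[of "\<lambda>a b c. F (x # a) b c"] add.assoc)
qed

lemma sum_splits_ne_eq_sum: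
  "sum_splits_ne X F = (\<Sum>j<length X. F (take (Suc j) X) (drop (Suc j) X))"
proof (cases X)
  case (Cons x xs)
  show ?thesis unfolding Cons sum_splits_ne_Cons sum_splits_def
    by (simp add: lessThan_Suc_atMost[symmetric])
qed (simp add: sum_splits_ne_def)

lemma sum_splits_ne_nested:
  "sum_splits_ne X (\<lambda>l c. sum_splits_ne l (\<lambda>a b. F a b c))
     = sum_splits X (\<lambda>l c. sum_splits l (\<lambda>a b. if a = [] then 0 else F a b c))"
proof -
  have "sum_splits_ne X (\<lambda>l c. sum_splits_ne l (\<lambda>a b. F a b c))
      = sum_splits X (\<lambda>l c. sum_splits_ne l (\<lambda>a b. F a b c))"
    by (simp add: sum_splits_unfold_Nil[of X "\<lambda>l c. sum_splits_ne l (\<lambda>a b. F a b c)"])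
  then show ?thesis
    by (simp only: sum_splits_ne_def[of _ "\<lambda>a b. F a b _"])
qed

lemma sum_splits_ne_eq_sum_splits:
  "(\<And>b c. G [] b c = 0) \<Longrightarrow>
     sum_splits_ne X (\<lambda>l c. sum_splits l (\<lambda>a b. G a b c)) = sum_splits X (\<lambda>l c. sum_splits l (\<lambda>a b. G a b c))"
  by (simp add: sum_splits_unfold_Nil[of X "\<lambda>l c. sum_splits l (\<lambda>a b. G a b c)"])

text \<open>\<open>sum_pieces k X F\<close> sums \<open>F ps\<close> over all lists \<open>ps\<close> of \<open>k\<close> (possibly empty) pieces with
  \<open>concat ps = X\<close>.\<close>

fun sum_pieces :: "nat \<Rightarrow> 'a list \<Rightarrow> ('a list list \<Rightarrow> 'b::comm_monoid_add) \<Rightarrow> 'b" where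
  "sum_pieces 0 X F = 0"
| "sum_pieces (Suc 0) X F = F [X]"
| "sum_pieces (Suc (Suc k)) X F = sum_splits X (\<lambda>a r. sum_pieces (Suc k) r (\<lambda>ps. F (a # ps)))"

lemma sum_pieces_swap_sum_splits:
  "sum_pieces m A (\<lambda>ps. sum_splits B (\<lambda>u v. G ps u v)) = sum_splits B (\<lambda>u v. sum_pieces m A (\<lambda>ps. G ps u v))"
proof (induction m A "\<lambda>ps. sum_splits B (\<lambda>u v. G ps u v)" arbitrary: G rule: sum_pieces.induct)
  case (3 k X)
  then show ?case by (simp add: sum_splits_swap[of X B])
qed (simp_all add: sum_splits_def)

lemma sum_pieces_zero [simp]: "sum_pieces m A (\<lambda>ps. 0) = 0"
proof (induction m arbitrary: A)
  case (Suc m)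
  then show ?case by (cases m) simp_all
qed simp

lemma sum_pieces_swap:
  "sum_pieces m A (\<lambda>ps. sum_pieces j B (\<lambda>qs. G ps qs)) = sum_pieces j B (\<lambda>qs. sum_pieces m A (\<lambda>ps. G ps qs))"
  by (induction j B "\<lambda>qs. sum_pieces m A (\<lambda>ps. G ps qs)" arbitrary: G rule: sum_pieces.induct)
    (simp_all add: sum_pieces_swap_sum_splits)

lemma sum_pieces_append:
  "sum_splits X (\<lambda>a r. sum_pieces (Suc j) a (\<lambda>qs. sum_pieces (Suc m) r (\<lambda>ps. F (qs @ ps))))
     = sum_pieces (Suc j + Suc m) X F"
proof (induction j arbitrary: X F)
  case 0
  show ?case by simp
next
  case (Suc j)
  have "sum_splits X (\<lambda>a r. sum_pieces (Suc (Suc j)) a (\<lambda>qs. sum_pieces (Suc m) r (\<lambda>ps. F (qs @ ps))))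
      = sum_splits X (\<lambda>a r. sum_splits a
          (\<lambda>a1 r1. sum_pieces (Suc j) r1 (\<lambda>qs. sum_pieces (Suc m) r (\<lambda>ps. F (a1 # qs @ ps)))))"
    by simp
  also have "\<dots> = sum_splits X (\<lambda>a1 r'. sum_splits r'
          (\<lambda>r1 r. sum_pieces (Suc j) r1 (\<lambda>qs. sum_pieces (Suc m) r (\<lambda>ps. F (a1 # qs @ ps)))))"
    by (rule sum_splits_assoc)
  also have "\<dots> = sum_splits X (\<lambda>a1 r'. sum_pieces (Suc j + Suc m) r' (\<lambda>ps. F (a1 # ps)))"
    by (rule sum_splits_cong, rule Suc.IH)
  also have "\<dots> = sum_pieces (Suc (Suc j) + Suc m) X F"
    by simp
  finally show ?case .
qed

lemma sum_pieces_refine: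
  assumes "k < m"
  shows "sum_pieces m X (\<lambda>ps. sum_pieces (Suc j) (ps ! k) (\<lambda>qs. F (take k ps @ qs @ drop (Suc k) ps)))
           = sum_pieces (m + j) X F"
  using assms
proof (induction k arbitrary: m X F)
  case 0
  then obtain m' where m: "m = Suc m'" by (cases m) auto
  show ?case
  proof (cases m')
    case 0
    then show ?thesis using m by simp
  next
    case (Suc m'')
    have "sum_pieces m X (\<lambda>ps. sum_pieces (Suc j) (ps ! 0) (\<lambda>qs. F (take 0 ps @ qs @ drop (Suc 0) ps)))
       = sum_splits X (\<lambda>a r. sum_pieces (Suc m'') r (\<lambda>ps. sum_pieces (Suc j) a (\<lambda>qs. F (qs @ ps))))"
      using m Suc by simp
    also have "\<dots> = sum_splits X (\<lambda>a r. sum_pieces (Suc j) a (\<lambda>qs. sum_pieces (Suc m'') r (\<lambda>ps. F (qs @ ps))))"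
      by (rule sum_splits_cong, rule sum_pieces_swap)
    also have "\<dots> = sum_pieces (m + j) X F"
      using m Suc sum_pieces_append[of X j m'' F] by (simp add: add.commute)
    finally show ?thesis .
  qed
next
  case (Suc k)
  then obtain m' where m: "m = Suc (Suc m')" by (cases m; cases "m - 1") auto
  have "sum_pieces m X (\<lambda>ps. sum_pieces (Suc j) (ps ! Suc k) (\<lambda>qs. F (take (Suc k) ps @ qs @ drop (Suc (Suc k)) ps)))
     = sum_splits X (\<lambda>a r. sum_pieces (Suc m') r
         (\<lambda>ps. sum_pieces (Suc j) (ps ! k) (\<lambda>qs. F (a # (take k ps @ qs @ drop (Suc k) ps)))))"
    using m by simp
  also have "\<dots> = sum_splits X (\<lambda>a r. sum_pieces (Suc m' + j) r (\<lambda>ps. F (a # ps)))"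
    using Suc.prems m by (intro sum_splits_cong Suc.IH) simp
  also have "\<dots> = sum_pieces (m + j) X F"
    using m by simp
  finally show ?case .
qed

definition sum_pieces7 ::
  "'a list \<Rightarrow> ('a list \<Rightarrow> 'a list \<Rightarrow> 'a list \<Rightarrow> 'a list \<Rightarrow> 'a list \<Rightarrow> 'a list \<Rightarrow> 'a list \<Rightarrow> 'b::comm_monoid_add) \<Rightarrow> 'b"
  where "sum_pieces7 X F = sum_pieces 7 X (\<lambda>ps. F (ps!0) (ps!1) (ps!2) (ps!3) (ps!4) (ps!5) (ps!6))"

text \<open>\<open>sum_pieces7_nest_m_k_j\<close> writes the sum over seven pieces as a nested sum over \<open>m\<close>
  pieces of which piece number \<open>k\<close> (counting from 0) is split into \<open>j\<close> pieces; a second pair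
  \<open>k', j'\<close> splits a further piece of the \<open>m\<close>-fold decomposition.\<close>

lemma sum_pieces7_nest_5_2_3: "sum_pieces7 X F = sum_splits X (\<lambda>a r. sum_splits r (\<lambda>e r. sum_splits r (\<lambda>b r.
    sum_splits r (\<lambda>c d. sum_splits b (\<lambda>u r. sum_splits r (\<lambda>v w. F a e u v w c d))))))"
  unfolding sum_pieces7_def sum_pieces_refine[of 2 5 X 2, symmetric, simplified]
  by (simp add: numeral_eq_Suc)

lemma sum_pieces7_nest_5_2_2_4_2: "sum_pieces7 X F = sum_splits X (\<lambda>a r. sum_splits r (\<lambda>e r. sum_splits r (\<lambda>b r.
    sum_splits r (\<lambda>c d. sum_splits b (\<lambda>u v1. sum_splits d (\<lambda>v2 d2. F a e u v1 c v2 d2))))))"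
  unfolding sum_pieces7_def sum_pieces_refine[of 5 6 X 1, symmetric, simplified]
    sum_pieces_refine[of 2 5 X 1, symmetric, simplified]
  by (simp add: numeral_eq_Suc)

lemma sum_pieces7_nest_5_2_2_0_2: "sum_pieces7 X F = sum_splits X (\<lambda>a r. sum_splits r (\<lambda>e r. sum_splits r (\<lambda>b r.
    sum_splits r (\<lambda>c d. sum_splits b (\<lambda>u v1. sum_splits a (\<lambda>a1 a2. F a1 a2 e u v1 c d))))))"
  unfolding sum_pieces7_def sum_pieces_refine[of 0 6 X 1, symmetric, simplified]
    sum_pieces_refine[of 2 5 X 1, symmetric, simplified]
  by (simp add: numeral_eq_Suc)

lemma sum_pieces7_nest_5_4_3: "sum_pieces7 X F = sum_splits X (\<lambda>a r. sum_splits r (\<lambda>e r. sum_splits r (\<lambda>b r.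
    sum_splits r (\<lambda>c d. sum_splits d (\<lambda>d1 r. sum_splits r (\<lambda>v d2. F a e b c d1 v d2))))))"
  unfolding sum_pieces7_def sum_pieces_refine[of 4 5 X 2, symmetric, simplified]
  by (simp add: numeral_eq_Suc)

lemma sum_pieces7_nest_5_4_2_0_2: "sum_pieces7 X F = sum_splits X (\<lambda>a r. sum_splits r (\<lambda>e r. sum_splits r (\<lambda>b r.
    sum_splits r (\<lambda>c d. sum_splits d (\<lambda>d1 d2. sum_splits a (\<lambda>a1 a2. F a1 a2 e b c d1 d2))))))"
  unfolding sum_pieces7_def sum_pieces_refine[of 0 6 X 1, symmetric, simplified]
    sum_pieces_refine[of 4 5 X 1, symmetric, simplified]
  by (simp add: numeral_eq_Suc)

lemma sum_pieces7_nest_5_0_3: "sum_pieces7 X F = sum_splits X (\<lambda>a r. sum_splits r (\<lambda>e r. sum_splits r (\<lambda>b r.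
    sum_splits r (\<lambda>c d. sum_splits a (\<lambda>a1 r. sum_splits r (\<lambda>v a2. F a1 v a2 e b c d))))))"
  unfolding sum_pieces7_def sum_pieces_refine[of 0 5 X 2, symmetric, simplified]
  by (simp add: numeral_eq_Suc)

lemma sum_pieces7_nest_5_3_3: "sum_pieces7 X F = sum_splits X (\<lambda>a r. sum_splits r (\<lambda>e r. sum_splits r (\<lambda>b r.
    sum_splits r (\<lambda>c d. sum_splits c (\<lambda>u r. sum_splits r (\<lambda>v w. F a e b u v w d))))))"
  unfolding sum_pieces7_def sum_pieces_refine[of 3 5 X 2, symmetric, simplified]
  by (simp add: numeral_eq_Suc)

lemma sum_pieces7_nest_5_1_3: "sum_pieces7 X F = sum_splits X (\<lambda>a r. sum_splits r (\<lambda>e r. sum_splits r (\<lambda>b r.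
    sum_splits r (\<lambda>c d. sum_splits e (\<lambda>p r. sum_splits r (\<lambda>v w. F a p v w b c d))))))"
  unfolding sum_pieces7_def sum_pieces_refine[of 1 5 X 2, symmetric, simplified]
  by (simp add: numeral_eq_Suc)

lemma sum_pieces7_nest_3_1_5: "sum_pieces7 X F = sum_splits X (\<lambda>a r. sum_splits r (\<lambda>e d. sum_splits e (\<lambda>a2 r.
    sum_splits r (\<lambda>e' r. sum_splits r (\<lambda>b r. sum_splits r (\<lambda>c d'. F a a2 e' b c d' d))))))"
  unfolding sum_pieces7_def sum_pieces_refine[of 1 3 X 4, symmetric, simplified]
  by (simp add: numeral_eq_Suc)

lemma sum_pieces7_nest_3_0_5: "sum_pieces7 X F = sum_splits X (\<lambda>p r. sum_splits r (\<lambda>v w. sum_splits p (\<lambda>a r.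
    sum_splits r (\<lambda>e r. sum_splits r (\<lambda>b r. sum_splits r (\<lambda>c d1. F a e b c d1 v w))))))"
  unfolding sum_pieces7_def sum_pieces_refine[of 0 3 X 4, symmetric, simplified]
  by (simp add: numeral_eq_Suc)

lemma sum_pieces7_nest_3_0_4_2_2: "sum_pieces7 X F = sum_splits X (\<lambda>p r. sum_splits r (\<lambda>v w. sum_splits p (\<lambda>a r.
    sum_splits r (\<lambda>e r. sum_splits r (\<lambda>b c1. sum_splits w (\<lambda>c2 d. F a e b c1 v c2 d))))))"
  unfolding sum_pieces7_def sum_pieces_refine[of 5 6 X 1, symmetric, simplified]
    sum_pieces_refine[of 0 3 X 3, symmetric, simplified]
  by (simp add: numeral_eq_Suc)

lemma sum_pieces7_nest_3_0_3_2_3: "sum_pieces7 X F = sum_splits X (\<lambda>p r. sum_splits r (\<lambda>v w. sum_splits p (\<lambda>a r.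
    sum_splits r (\<lambda>e b1. sum_splits w (\<lambda>b2 r. sum_splits r (\<lambda>c d. F a e b1 v b2 c d))))))"
  unfolding sum_pieces7_def sum_pieces_refine[of 4 5 X 2, symmetric, simplified]
    sum_pieces_refine[of 0 3 X 2, symmetric, simplified]
  by (simp add: numeral_eq_Suc)

lemma sum_pieces7_nest_3_0_2_2_4: "sum_pieces7 X F = sum_splits X (\<lambda>p r. sum_splits r (\<lambda>v w. sum_splits p (\<lambda>a e1.
    sum_splits w (\<lambda>e2 r. sum_splits r (\<lambda>b r. sum_splits r (\<lambda>c d. F a e1 v e2 b c d))))))"
  unfolding sum_pieces7_def sum_pieces_refine[of 3 4 X 3, symmetric, simplified]
    sum_pieces_refine[of 0 3 X 1, symmetric, simplified]
  by (simp add: numeral_eq_Suc)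

lemma sum_pieces7_nest_3_2_5: "sum_pieces7 X F = sum_splits X (\<lambda>p r. sum_splits r (\<lambda>v w. sum_splits w (\<lambda>a2 r.
    sum_splits r (\<lambda>e r. sum_splits r (\<lambda>b r. sum_splits r (\<lambda>c d. F p v a2 e b c d))))))"
  unfolding sum_pieces7_def sum_pieces_refine[of 2 3 X 4, symmetric, simplified]
  by (simp add: numeral_eq_Suc)

section \<open>Signs and multilinearity\<close>

lemma sg_0 [simp]: "sg n 0 = 0"
  by (simp add: sg_def)

lemma sg_add: "sg n (x + y) = sg n x + sg n y"
  by (simp add: sg_def)

lemma sg_diff: "sg n (x - y) = sg n x - sg n y"
  by (simp add: sg_def)

lemma sg_sg: "sg m (sg n x) = sg (m + n) x"
  by (simp add: sg_def)

lemma sg_parity_cong: "even (m + n) \<Longrightarrow> sg m x = sg n x"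
  by (simp add: sg_def)

lemma sg_mult_add_mult: "sg (a * b + b * (a + c)) x = sg (b * c) x"
  by (rule sg_parity_cong) (simp add: even_add even_mult_iff, argo)

lemma sg_sum_splits: "sg n (sum_splits X F) = sum_splits X (\<lambda>a b. sg n (F a b))"
  unfolding sum_splits_def sg_def by (simp add: sum_negf)

lemma sg_sum_pieces7: "sg n (sum_pieces7 X F) = sum_pieces7 X (\<lambda>p1 p2 p3 p4 p5 p6 p7. sg n (F p1 p2 p3 p4 p5 p6 p7))"
proof -
  have "sg n (sum_pieces m X G) = sum_pieces m X (\<lambda>ps. sg n (G ps))" for m and G :: "_ \<Rightarrow> 'a"
    by (induction m X G rule: sum_pieces.induct) (simp_all add: sg_sum_splits)
  then show ?thesis by (simp add: sum_pieces7_def)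
qed

lemma if_zero_sum_splits: "(if c then 0 else sum_splits X F) = sum_splits X (\<lambda>a b. if c then 0 else F a b)"
  by simp

lemma if_zero_add: "(if c then 0 else x + y) = (if c then 0 else x) + (if c then (0::'a::monoid_add) else y)"
  by simp

lemma if_zero_sg: "(if c then 0 else sg n x) = sg n (if c then 0 else x)"
  by simp

lemma degs_Cons [simp]: "degs (x # xs) = fst x + degs xs"
  by (simp add: degs_def)

lemma degs_append [simp]: "degs (xs @ ys) = degs xs + degs ys"
  by (simp add: degs_def)

lemma fst_app [simp]: "fst (app \<phi> xs) = fst \<phi> + degs xs"
  by (simp add: app_def)

lemma fst_gcomp [simp]: "fst (gcomp \<phi> \<psi>) = fst \<phi> + fst \<psi>"
  by (simp add: gcomp_def)

lemma multilin_add: "multilin f \<Longrightarrow> f (xs @ (d, a + b) # ys) = f (xs @ (d, a) # ys) + f (xs @ (d, b) # ys)"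
  unfolding multilin_def by blast

lemma multilin_zero: "multilin f \<Longrightarrow> f (xs @ (d, 0) # ys) = 0"
  using multilin_add[of f xs d 0 0 ys] by simp

lemma multilin_uminus: "multilin f \<Longrightarrow> f (xs @ (d, - a) # ys) = - f (xs @ (d, a) # ys)"
  using multilin_add[of f xs d a "- a" ys] multilin_zero[of f xs d ys]
  by (simp add: eq_neg_iff_add_eq_0 add.commute)

lemma multilin_diff: "multilin f \<Longrightarrow> f (xs @ (d, a - b) # ys) = f (xs @ (d, a) # ys) - f (xs @ (d, b) # ys)"
  using multilin_add[of f xs d a "- b" ys] multilin_uminus[of f xs d b ys] by simp

lemma multilin_sg: "multilin f \<Longrightarrow> f (xs @ (d, sg n a) # ys) = sg n (f (xs @ (d, a) # ys))"
  by (simp add: sg_def multilin_uminus)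

lemma multilin_sum: "finite A \<Longrightarrow> multilin f \<Longrightarrow> f (xs @ (d, sum g A) # ys) = (\<Sum>i\<in>A. f (xs @ (d, g i) # ys))"
  by (induction A rule: finite_induct) (simp_all add: multilin_zero multilin_add)

lemma multilin_sum_splits: "multilin f \<Longrightarrow> f (xs @ (d, sum_splits L F) # ys) = sum_splits L (\<lambda>u v. f (xs @ (d, F u v) # ys))"
  unfolding sum_splits_def by (simp add: multilin_sum)

lemma multilin_sum_splits_hd: "multilin f \<Longrightarrow> f ((d, sum_splits L F) # ys) = sum_splits L (\<lambda>u v. f ((d, F u v) # ys))"
  using multilin_sum_splits[of f "[]"] by simp

lemma multilin_sg_hd: "multilin f \<Longrightarrow> f ((d, sg n a) # ys) = sg n (f ((d, a) # ys))"
  using multilin_sg[of f "[]"] by simp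

section \<open>The operations as sums over decompositions\<close>

lemma take_append_seg: "i \<le> j \<Longrightarrow> take i X @ seg i j X = take j X"
  unfolding seg_def using append_take_drop_id[of i "take j X"] by (simp add: min_def)

lemma seg_append_drop: "i \<le> j \<Longrightarrow> seg i j X @ drop j X = drop i X"
proof -
  assume "i \<le> j"
  then have "drop j X = drop (j - i) (drop i X)" by simp
  then show ?thesis unfolding seg_def drop_take by (metis append_take_drop_id)
qed

lemma sum_splits2_eq_index_sum:
  "sum_splits X (\<lambda>a r. sum_splits r (\<lambda>e d. if a = [] then 0 else F a e d))
     = (\<Sum>j<length X. \<Sum>i\<le>j. F (take (i+1) X) (seg (i+1) (j+1) X) (drop (j+1) X))"
proof -
  have "sum_splits X (\<lambda>a r. sum_splits r (\<lambda>e d. if a = [] then 0 else F a e d))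
      = sum_splits_ne X (\<lambda>l d. sum_splits_ne l (\<lambda>a e. F a e d))"
    by (simp add: sum_splits_ne_nested sum_splits_assoc)
  also have "\<dots> = (\<Sum>j<length X. \<Sum>i\<le>j. F (take (i+1) X) (seg (i+1) (j+1) X) (drop (j+1) X))"
    unfolding sum_splits_ne_eq_sum seg_def
    by (intro sum.cong refl) (auto simp: lessThan_Suc_atMost[symmetric] min_def)
  finally show ?thesis .
qed

lemma sum_splits4_eq_index_sum:
  "sum_splits X (\<lambda>a r. sum_splits r (\<lambda>e r. sum_splits r (\<lambda>b r. sum_splits r (\<lambda>c d.
       if a = [] then 0 else F a e b c d))))
     = (\<Sum>q<length X. \<Sum>s\<le>q. \<Sum>j\<le>s. \<Sum>i\<le>j.
          F (take (i+1) X) (seg (i+1) (j+1) X) (seg (j+1) (s+1) X) (seg (s+1) (q+1) X) (drop (q+1) X))"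
proof -
  have "sum_splits X (\<lambda>a r. sum_splits r (\<lambda>e r. sum_splits r (\<lambda>b r. sum_splits r (\<lambda>c d.
       if a = [] then 0 else F a e b c d))))
    = sum_splits_ne X (\<lambda>l4 d. sum_splits_ne l4 (\<lambda>l3 c. sum_splits_ne l3 (\<lambda>l2 b.
        sum_splits_ne l2 (\<lambda>a e. F a e b c d))))"
    by (simp add: sum_splits_ne_nested sum_splits_ne_eq_sum_splits sum_splits_assoc del: sum_splits_ne_Cons)
  also have "\<dots> = (\<Sum>q<length X. \<Sum>s\<le>q. \<Sum>j\<le>s. \<Sum>i\<le>j.
          F (take (i+1) X) (seg (i+1) (j+1) X) (seg (j+1) (s+1) X) (seg (s+1) (q+1) X) (drop (q+1) X))"
    unfolding sum_splits_ne_eq_sum seg_def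
    by (intro sum.cong refl) (auto simp: lessThan_Suc_atMost[symmetric] min_def)
  finally show ?thesis .
qed

definition Lie_ins :: "'m::ab_group_add coch \<Rightarrow> ('m, 'c::ab_group_add) chop" where
  "Lie_ins \<phi> t X = (\<Sum>j<length X. \<Sum>i\<le>j.
     sg (fst \<phi> * degs (take (i+1) X))
       (t (take (i+1) X @ [app \<phi> (seg (i+1) (j+1) X)] @ drop (j+1) X)))"

lemma Lie_eq_Lie_ins_add_L0: "Lie \<phi> t = (\<lambda>X. Lie_ins \<phi> t X + L0 \<phi> t X)"
  by (rule ext) (simp add: Lie_def Lie_ins_def)

lemma gcomp_sum_splits: "snd (gcomp \<phi> \<psi>) xs
    = sum_splits xs (\<lambda>u r. sum_splits r (\<lambda>v w. sg (fst \<psi> * degs u) (snd \<phi> (u @ [app \<psi> v] @ w))))"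
proof -
  have "sum_splits xs (\<lambda>l w. sum_splits l (\<lambda>u v. sg (fst \<psi> * degs u) (snd \<phi> (u @ [app \<psi> v] @ w))))
      = snd (gcomp \<phi> \<psi>) xs"
    unfolding gcomp_def sum_splits_def seg_def
    by (auto intro!: sum.cong simp: min_def)
  then show ?thesis
    by (simp only: sum_splits_assoc)
qed

lemma L0_sum_splits: "L0 \<alpha> t X
    = sum_splits X (\<lambda>a r. sum_splits r (\<lambda>e d. if a = [] then 0 else sg (degs (a @ e) * degs d) (t (app \<alpha> (d @ a) # e))))"
  unfolding sum_splits2_eq_index_sum L0_def
  by (intro sum.cong refl) (simp add: take_append_seg del: degs_append)

lemma Lie_ins_sum_splits: "Lie_ins \<phi> t X
    = sum_splits X (\<lambda>p r. sum_splits r (\<lambda>v w. if p = [] then 0 else sg (fst \<phi> * degs p) (t (p @ [app \<phi> v] @ w))))"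
  unfolding sum_splits2_eq_index_sum Lie_ins_def by simp

lemma rho_sum_splits: "rho \<phi> \<psi> t X
    = sum_splits X (\<lambda>a r. sum_splits r (\<lambda>e r. sum_splits r (\<lambda>b r. sum_splits r (\<lambda>c d. if a = [] then 0 else
        sg (fst \<psi> * degs b + degs (a @ e) * degs (b @ c @ d)) (t (app \<phi> (b @ [app \<psi> c] @ d @ a) # e))))))"
  unfolding sum_splits4_eq_index_sum rho_def
  by (intro sum.cong refl) (simp add: take_append_seg seg_append_drop)

lemma multilin_app_gcomp: "multilin t \<Longrightarrow> t (app (gcomp \<phi> \<psi>) Y # e)
    = sum_splits Y (\<lambda>u r. sum_splits r (\<lambda>v w. sg (fst \<psi> * degs u) (t (app \<phi> (u @ [app \<psi> v] @ w) # e))))"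
  unfolding app_def[of "gcomp \<phi> \<psi>"] gcomp_sum_splits
  by (simp add: multilin_sum_splits_hd multilin_sg_hd) (intro sum_splits_cong; simp add: app_def algebra_simps)

lemma multilin_app_inner_gcomp:
  assumes "multilin (snd \<alpha>)" and "multilin t"
  shows "t (app \<alpha> (b @ app (gcomp \<phi> \<psi>) c # rest) # e)
    = sum_splits c (\<lambda>u r. sum_splits r (\<lambda>v w.
        sg (fst \<psi> * degs u) (t (app \<alpha> (b @ app \<phi> (u @ app \<psi> v # w) # rest) # e))))"
  unfolding app_def[of \<alpha>] app_def[of "gcomp \<phi> \<psi>"] gcomp_sum_splits
  by (simp add: assms multilin_sum_splits multilin_sg multilin_sum_splits_hd multilin_sg_hd)
    (intro sum_splits_cong; simp add: app_def algebra_simps)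

lemma rho_add: "rho \<phi> \<psi> (\<lambda>Z. t Z + t' Z) X = rho \<phi> \<psi> t X + rho \<phi> \<psi> t' X"
  unfolding rho_def by (simp add: sg_add sum.distrib)

section \<open>Normal forms of the terms of the identity\<close>

text \<open>The summands are functions of the seven segments.  \<open>A\<^sub>1 \<dots> A\<^sub>6\<close> come from
  \<open>\<rho>\<^bsub>\<phi>\<^sub>1\<circ>\<phi>\<^sub>2,\<psi>\<^esub>\<close>, \<open>B \<alpha> \<beta>\<close> from \<open>\<rho>\<^bsub>\<phi>\<^sub>1,\<alpha>\<circ>\<beta>\<^esub>\<close>, \<open>R\<close> from \<open>T\<^bsub>\<phi>\<^sub>1,\<phi>\<^sub>2,\<psi>\<^esub>\<close>, \<open>D\<close> from inserting \<open>\<phi>\<^sub>2\<close>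
  into the output of \<open>\<rho>\<^bsub>\<phi>\<^sub>1,\<psi>\<^esub>\<close>, \<open>E\<^sub>1 \<dots> E\<^sub>5\<close> from \<open>\<rho>\<^bsub>\<phi>\<^sub>1,\<psi>\<^esub>\<close> after inserting \<open>\<phi>\<^sub>2\<close> into the
  chain (one for each segment of \<open>\<rho>\<^bsub>\<phi>\<^sub>1,\<psi>\<^esub>\<close> that can receive the new factor), and \<open>E\<^sub>0\<close> from
  \<open>\<rho>\<^bsub>\<phi>\<^sub>1,\<psi>\<^esub>\<close> after \<open>\<L>\<^sup>0\<^bsub>\<phi>\<^sub>2\<^esub>\<close>.  The guard \<open>a = []\<close> (or \<open>a\<^sub>1 = []\<close>) encodes that the block fed
  cyclically into \<open>\<phi>\<^sub>1\<close> always contains \<open>x\<^sub>0\<close>.\<close>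

context
  fixes \<phi>1 \<phi>2 \<psi> :: "'m::ab_group_add coch" and t :: "'m hel list \<Rightarrow> 'c::ab_group_add"
begin

definition "A1 a e u v w c d = sg (fst \<psi> * degs (u @ v @ w) + degs (a @ e) * degs (u @ v @ w @ c @ d) + fst \<phi>2 * degs u)
  (if a = [] then 0 else t (app \<phi>1 (u @ [app \<phi>2 v] @ w @ [app \<psi> c] @ d @ a) # e))"
definition "A2 a e u v1 c v2 d2 = sg (fst \<psi> * degs (u @ v1) + degs (a @ e) * degs (u @ v1 @ c @ v2 @ d2) + fst \<phi>2 * degs u)
  (if a = [] then 0 else t (app \<phi>1 (u @ [app \<phi>2 (v1 @ [app \<psi> c] @ v2)] @ d2 @ a) # e))"
definition "A3 a1 a2 e u v1 c d = sg (fst \<psi> * degs (u @ v1) + degs (a1 @ a2 @ e) * degs (u @ v1 @ c @ d) + fst \<phi>2 * degs u)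
  (if a1 = [] then 0 else t (app \<phi>1 (u @ [app \<phi>2 (v1 @ [app \<psi> c] @ d @ a1)] @ a2) # e))"
definition "A4 a e b c d1 v d2 = sg (fst \<psi> * degs b + degs (a @ e) * degs (b @ c @ d1 @ v @ d2) + fst \<phi>2 * (degs b + (fst \<psi> + degs c) + degs d1))
  (if a = [] then 0 else t (app \<phi>1 (b @ [app \<psi> c] @ d1 @ [app \<phi>2 v] @ d2 @ a) # e))"
definition "A5 a1 a2 e b c d1 d2 = sg (fst \<psi> * degs b + degs (a1 @ a2 @ e) * degs (b @ c @ d1 @ d2) + fst \<phi>2 * (degs b + (fst \<psi> + degs c) + degs d1))
  (if a1 = [] then 0 else t (app \<phi>1 (b @ [app \<psi> c] @ d1 @ [app \<phi>2 (d2 @ a1)] @ a2) # e))"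
definition "A6 a1 v a2 e b c d = sg (fst \<psi> * degs b + degs (a1 @ v @ a2 @ e) * degs (b @ c @ d) + fst \<phi>2 * (degs b + (fst \<psi> + degs c) + degs d + degs a1))
  (if a1 = [] then 0 else t (app \<phi>1 (b @ [app \<psi> c] @ d @ a1 @ [app \<phi>2 v] @ a2) # e))"
definition "B \<alpha> \<beta> a e b u v w d = sg ((fst \<alpha> + fst \<beta>) * degs b + degs (a @ e) * degs (b @ u @ v @ w @ d) + fst \<beta> * degs u)
  (if a = [] then 0 else t (app \<phi>1 (b @ [app \<alpha> (u @ [app \<beta> v] @ w)] @ d @ a) # e))"
definition "D a p v w b c d = sg (fst \<psi> * degs b + degs (a @ p @ v @ w) * degs (b @ c @ d) + fst \<phi>2 * ((fst \<phi>1 + degs (b @ [app \<psi> c] @ d @ a)) + degs p))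
  (if a = [] then 0 else t (app \<phi>1 (b @ [app \<psi> c] @ d @ a) # p @ [app \<phi>2 v] @ w))"
definition "R a a2 e' d' b c d = sg (fst \<psi> * degs b + degs (a @ a2 @ e' @ d') * degs (b @ c @ d) + (fst \<phi>2 + degs (b @ [app \<psi> c] @ d @ a) + degs a2 + degs e') * degs d')
  (if a = [] then 0 else t (app \<phi>1 (d' @ [app \<phi>2 (b @ [app \<psi> c] @ d @ a)] @ a2) # e'))"
definition "E0 a a2 e b c d' d = sg (degs (a @ a2 @ e @ b @ c @ d') * degs d + (fst \<psi> * degs b + (fst \<phi>2 + degs (d @ a) + degs a2 + degs e) * degs (b @ c @ d')))
  (if a = [] then 0 else t (app \<phi>1 (b @ [app \<psi> c] @ d' @ [app \<phi>2 (d @ a)] @ a2) # e))"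
definition "E1 a1 v a2 e b c d = sg (fst \<phi>2 * degs a1 + (fst \<psi> * degs b + degs (a1 @ [app \<phi>2 v] @ a2 @ e) * degs (b @ c @ d)))
  (if a1 = [] then 0 else t (app \<phi>1 (b @ [app \<psi> c] @ d @ a1 @ [app \<phi>2 v] @ a2) # e))"
definition "E2 a e b1 v b2 c d = sg (fst \<phi>2 * degs (a @ e @ b1) + (fst \<psi> * degs (b1 @ [app \<phi>2 v] @ b2) + degs (a @ e) * degs (b1 @ [app \<phi>2 v] @ b2 @ c @ d)))
  (if a = [] then 0 else t (app \<phi>1 (b1 @ [app \<phi>2 v] @ b2 @ [app \<psi> c] @ d @ a) # e))"
definition "E3 a e b c1 v c2 d = sg (fst \<phi>2 * degs (a @ e @ b @ c1) + (fst \<psi> * degs b + degs (a @ e) * degs (b @ c1 @ [app \<phi>2 v] @ c2 @ d)))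
  (if a = [] then 0 else t (app \<phi>1 (b @ [app \<psi> (c1 @ [app \<phi>2 v] @ c2)] @ d @ a) # e))"
definition "E4 a e b c d1 v d2 = sg (fst \<phi>2 * degs (a @ e @ b @ c @ d1) + (fst \<psi> * degs b + degs (a @ e) * degs (b @ c @ d1 @ [app \<phi>2 v] @ d2)))
  (if a = [] then 0 else t (app \<phi>1 (b @ [app \<psi> c] @ d1 @ [app \<phi>2 v] @ d2 @ a) # e))"
definition "E5 a e1 v e2 b c d = sg (fst \<phi>2 * degs (a @ e1) + (fst \<psi> * degs b + degs (a @ e1 @ [app \<phi>2 v] @ e2) * degs (b @ c @ d)))
  (if a = [] then 0 else t (app \<phi>1 (b @ [app \<psi> c] @ d @ a) # e1 @ [app \<phi>2 v] @ e2))"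

lemma rho_gcomp_left_expand:
  assumes "multilin t"
  shows "rho (gcomp \<phi>1 \<phi>2) \<psi> t X
    = (sum_pieces7 X A1 + (sum_pieces7 X A2 + sum_pieces7 X A3)) + ((sum_pieces7 X A4 + sum_pieces7 X A5) + sum_pieces7 X A6)"
  unfolding sum_pieces7_nest_5_2_3[of X A1] sum_pieces7_nest_5_2_2_4_2[of X A2] sum_pieces7_nest_5_2_2_0_2[of X A3]
    sum_pieces7_nest_5_4_3[of X A4] sum_pieces7_nest_5_4_2_0_2[of X A5] sum_pieces7_nest_5_0_3[of X A6]
  apply (simp add: rho_sum_splits multilin_app_gcomp[OF assms] sum_splits_append cong: if_cong)
  apply (simp add: sum_splits_ne_def sum_splits_add sg_sum_splits sg_add if_zero_sum_splits if_zero_add if_zero_sg sg_sg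
      cong: if_cong)
  apply (intro arg_cong2[where f="(+)"] sum_splits_cong)
  apply (simp_all add: A1_def A2_def A3_def A4_def A5_def A6_def algebra_simps)
  done

lemma rho_gcomp_right_expand:
  assumes "multilin (snd \<phi>1)" and "multilin t"
  shows "rho \<phi>1 (gcomp \<alpha> \<beta>) t X = sum_pieces7 X (B \<alpha> \<beta>)"
  unfolding sum_pieces7_nest_5_3_3[of X "B \<alpha> \<beta>"]
  apply (simp add: rho_sum_splits multilin_app_inner_gcomp[OF assms] cong: if_cong)
  apply (simp add: sum_splits_add sg_sum_splits sg_add if_zero_sum_splits if_zero_add if_zero_sg sg_sg cong: if_cong)
  apply (intro arg_cong2[where f="(+)"] sum_splits_cong)
  apply (simp_all add: B_def algebra_simps)
  done

lemma rho_gbr_expand: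
  assumes "multilin (snd \<phi>1)" and "multilin t"
  shows "rho \<phi>1 (gbr \<phi>2 \<psi>) t X = rho \<phi>1 (gcomp \<phi>2 \<psi>) t X - sg (fst \<phi>2 * fst \<psi>) (rho \<phi>1 (gcomp \<psi> \<phi>2) t X)"
  unfolding rho_sum_splits sg_sum_splits sum_splits_diff[symmetric]
  by (intro sum_splits_cong)
    (simp add: app_def gbr_def multilin_diff[OF assms(1)] multilin_sg[OF assms(1)]
      multilin_diff[OF assms(2), of "[]", simplified] multilin_sg_hd[OF assms(2)] sg_sg sg_diff algebra_simps)

lemma rho_Lie_ins_expand: "rho \<phi>1 \<psi> (Lie_ins \<phi>2 t) X = sum_pieces7 X D"
  unfolding sum_pieces7_nest_5_1_3[of X D]
  apply (simp add: rho_sum_splits Lie_ins_sum_splits sum_splits_Cons cong: if_cong)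
  apply (simp add: sum_splits_add sg_sum_splits sg_add if_zero_sum_splits if_zero_add if_zero_sg sg_sg cong: if_cong)
  apply (intro arg_cong2[where f="(+)"] sum_splits_cong)
  apply (simp_all add: D_def algebra_simps)
  done

lemma Top_expand: "Top \<phi>1 \<phi>2 \<psi> t X = sum_pieces7 X R"
  unfolding sum_pieces7_nest_5_1_3[of X R] Top_def ocomp_def
  apply (simp add: rho_sum_splits L0_sum_splits sum_splits_Cons cong: if_cong)
  apply (simp add: sum_splits_add sg_sum_splits sg_add if_zero_sum_splits if_zero_add if_zero_sg sg_sg cong: if_cong)
  apply (intro arg_cong2[where f="(+)"] sum_splits_cong)
  apply (simp_all add: R_def algebra_simps)
  done

lemma L0_rho_expand: "L0 \<phi>2 (rho \<phi>1 \<psi> t) X = sum_pieces7 X E0"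
  unfolding sum_pieces7_nest_3_1_5[of X E0]
  apply (simp add: rho_sum_splits L0_sum_splits sum_splits_Cons cong: if_cong)
  apply (simp add: sum_splits_add sg_sum_splits sg_add if_zero_sum_splits if_zero_add if_zero_sg sg_sg cong: if_cong)
  apply (intro arg_cong2[where f="(+)"] sum_splits_cong)
  apply (simp_all add: E0_def algebra_simps)
  done

lemma Lie_ins_rho_expand: "Lie_ins \<phi>2 (rho \<phi>1 \<psi> t) X
    = (((sum_pieces7 X E4 + sum_pieces7 X E3) + sum_pieces7 X E2) + sum_pieces7 X E5) + sum_pieces7 X E1"
  unfolding sum_pieces7_nest_3_0_5[of X E4] sum_pieces7_nest_3_0_4_2_2[of X E3] sum_pieces7_nest_3_0_3_2_3[of X E2]
    sum_pieces7_nest_3_0_2_2_4[of X E5] sum_pieces7_nest_3_2_5[of X E1]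
  apply (simp add: Lie_ins_sum_splits rho_sum_splits sum_splits_append cong: if_cong)
  apply (simp add: sum_splits_ne_def sum_splits_add sg_sum_splits sg_add if_zero_sum_splits if_zero_add if_zero_sg sg_sg
      cong: if_cong)
  apply (intro arg_cong2[where f="(+)"] sum_splits_cong)
  apply (simp_all add: E1_def E2_def E3_def E4_def E5_def algebra_simps)
  done

lemma sum_pieces7_A1_E2: "sum_pieces7 X A1 = sg (fst \<phi>2 * fst \<psi>) (sum_pieces7 X E2)"
  unfolding sg_sum_pieces7
  by (intro arg_cong[where f="sum_pieces7 X"] ext, unfold A1_def E2_def sg_sg, rule sg_parity_cong)
    (simp add: even_add even_mult_iff, argo)

lemma sum_pieces7_A2_B: "sum_pieces7 X A2 = sum_pieces7 X (B \<phi>2 \<psi>)"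
  by (intro arg_cong[where f="sum_pieces7 X"] ext, unfold A2_def B_def, rule sg_parity_cong)
    (simp add: even_add even_mult_iff, argo)

lemma sum_pieces7_A3_R: "sum_pieces7 X A3 = sum_pieces7 X R"
  by (intro arg_cong[where f="sum_pieces7 X"] ext, unfold A3_def R_def, rule sg_parity_cong)
    (simp add: even_add even_mult_iff, argo)

lemma sum_pieces7_A4_E4: "sum_pieces7 X A4 = sg (fst \<phi>2 * fst \<psi>) (sum_pieces7 X E4)"
  unfolding sg_sum_pieces7
  by (intro arg_cong[where f="sum_pieces7 X"] ext, unfold A4_def E4_def sg_sg, rule sg_parity_cong)
    (simp add: even_add even_mult_iff, argo)

lemma sum_pieces7_A5_E0: "sum_pieces7 X A5 = sg (fst \<phi>2 * fst \<psi>) (sum_pieces7 X E0)"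
  unfolding sg_sum_pieces7
  by (intro arg_cong[where f="sum_pieces7 X"] ext, unfold A5_def E0_def sg_sg, rule sg_parity_cong)
    (simp add: even_add even_mult_iff, argo)

lemma sum_pieces7_A6_E1: "sum_pieces7 X A6 = sg (fst \<phi>2 * fst \<psi>) (sum_pieces7 X E1)"
  unfolding sg_sum_pieces7
  by (intro arg_cong[where f="sum_pieces7 X"] ext, unfold A6_def E1_def sg_sg, rule sg_parity_cong)
    (simp add: even_add even_mult_iff, argo)

lemma sum_pieces7_B_E3: "sum_pieces7 X (B \<psi> \<phi>2) = sum_pieces7 X E3"
  by (intro arg_cong[where f="sum_pieces7 X"] ext, unfold B_def E3_def, rule sg_parity_cong)
    (simp add: even_add even_mult_iff, argo)

lemma sum_pieces7_D_E5: "sg (fst \<phi>1 * fst \<phi>2) (sum_pieces7 X D) = sg (fst \<phi>2 * fst \<psi>) (sum_pieces7 X E5)"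
  unfolding sg_sum_pieces7
  by (intro arg_cong[where f="sum_pieces7 X"] ext, unfold D_def E5_def sg_sg, rule sg_parity_cong)
    (simp add: even_add even_mult_iff, argo)

lemma ocomm_Lie_rho_expand:
  "ocomm (fst \<phi>2) (fst \<phi>1 + fst \<psi>) (Lie \<phi>2) (rho \<phi>1 \<psi>) t X
    = sum_pieces7 X D + Top \<phi>2 \<phi>1 \<psi> t X
      - sg (fst \<phi>2 * (fst \<phi>1 + fst \<psi>)) (((((sum_pieces7 X E4 + sum_pieces7 X E3) + sum_pieces7 X E2) + sum_pieces7 X E5)
          + sum_pieces7 X E1) + sum_pieces7 X E0)"
  unfolding ocomm_def ocomp_def Lie_eq_Lie_ins_add_L0 rho_add rho_Lie_ins_expand Lie_ins_rho_expand L0_rho_expand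
  by (simp add: Top_def ocomp_def)

end

theorem mainTheorem14:
  fixes \<phi>1 \<phi>2 \<psi> :: "'m::ab_group_add coch"
    and t :: "'m hel list \<Rightarrow> 'c::ab_group_add"
    and X :: "'m hel list"
  assumes "multilin (snd \<phi>1)" and "multilin (snd \<phi>2)" and "multilin (snd \<psi>)"
    and "multilin t"
  shows "rho (gcomp \<phi>1 \<phi>2) \<psi> t X - rho \<phi>1 (gbr \<phi>2 \<psi>) t X
           + sg (fst \<phi>1 * fst \<phi>2) (ocomm (fst \<phi>2) (fst \<phi>1 + fst \<psi>) (Lie \<phi>2) (rho \<phi>1 \<psi>) t X)
         = Top \<phi>1 \<phi>2 \<psi> t X + sg (fst \<phi>1 * fst \<phi>2) (Top \<phi>2 \<phi>1 \<psi> t X)"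
  unfolding ocomm_Lie_rho_expand rho_gcomp_left_expand[OF assms(4)] rho_gbr_expand[OF assms(1,4)]
    rho_gcomp_right_expand[OF assms(1,4)] Top_expand sum_pieces7_A1_E2 sum_pieces7_A2_B sum_pieces7_A3_R
    sum_pieces7_A4_E4 sum_pieces7_A5_E0 sum_pieces7_A6_E1 sum_pieces7_B_E3
  by (simp only: sg_add sg_diff sg_sg sg_mult_add_mult sum_pieces7_D_E5) (simp add: algebra_simps)

end
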